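(* Consider a regular spherically symmetric, asymptotically flat initial data set for the Einstein–Maxwell equations (with no magnetic charge). Assume there is a ball $\mathcal{B}=\{l\le l_0\}$ of finite area radius $\mathcal{R}=r(l_0)>0$ such that outside $\mathcal{B}$ (i.e. for $l\ge l_0$) the data are electrovacuum, and such that the dominant energy condition $\mu\ge |j|$ holds in $\mathcal{B}$. Let $Q$ be the total charge of $\mathcal{B}$ and assume $Q\neq 0$. Then: (i) If the exterior region $\{l\ge l_0\}$ is untrapped, then $2\mathcal{R}>|Q|$. (ii) If there is a horizon outside $\mathcal{B}$, then its area radius $\mathcal{R}_0$ satisfies $\mathcal{R}_0\ge |Q|$; equality holds for the horizon of the extreme Reissner–Nordström black hole ($M=|Q|$).
   Context: Regular spherically symmetric initial data: the manifold is $\mathbb{R}^3$ with metric $h=dl^2+r(l)^2(d\theta^2+\sin^2\theta\,d\phi^2)$, where $l\ge0$ is the geodesic distance to the center and $r(l)$ (the area radius) is smooth on $[0,\infty)$ with $r(0)=0$, $r'(0)=1$. The second fundamental form is $K_{ij}=n_in_jK_l+(h_{ij}-n_in_j)K_r$ with $n=\partial_l$ and functions $K_l(l),K_r(l)$. The constraint equations are $K_r(K_r+2K_l)-\frac{1}{r^2}(r'^2+2rr''-1)=8\pi\mu$, $\;K_r'+\frac{r'}{r}(K_r-K_l)=4\pi j$, where $\mu$ is the energy density and $j$ the radial momentum density. The dominant energy condition is $\mu\ge|j|$. The electric and magnetic fields are radial, $E=E^in_i$, $B=B^in_i$, satisfying $\frac{1}{r^2}(Er^2)'=4\pi\rho$,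 $\frac1{r^2}(Br^2)'=0$ with $\rho$ the charge density; no magnetic charges means $B=0$. Also $\mu=\mu_M+\frac1{8\pi}(E^2+B^2)$ with $\mu_M$ the non-electromagnetic energy density. Electrovacuum means $\mu_M=0$, $j=0$, $\rho=0$. The charge of $\mathcal{B}$ is $Q=4\pi\int_0^{l_0}\rho r^2\,dl=E(l_0)r(l_0)^2$. Asymptotic flatness: in Cartesian coordinates $h_{ij}=\delta_{ij}+\gamma_{ij}$ with $\gamma_{ij}=O(r^{-1})$, $\partial\gamma=O(r^{-2})$, $\partial^2\gamma=O(r^{-3})$, $K_{ij}=O(r^{-2})$, $\partial K=O(r^{-3})$; in particular $r(l)\to\infty$, $r'\to1$, $rK_r\to0$ as $l\to\infty$. Null expansions of the sphere at $l$: $\theta^\pm=\frac2r(r'\pm K_r r)$. A region between two concentric spheres is untrapped if $\theta^+\theta^->0$ there and trapped if $\theta^+\theta^-<0$. A horizon is the outer boundary of a trapped region; it satisfies $\theta^+\theta^-=0$, and $\mathcal{R}_0$ denotes its area radius. The mass $M$ of the data is the ADM mass, equal to $\lim_{l\to\infty}\mathcal{E}$ where $\mathcal{E}=\frac r2\bigl(1-\frac{r^2}{4}\theta^+\theta^-\bigr)$ is the Misner–Sharp energy. *)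

theory Defs
  imports "HOL-Analysis.Analysis"
begin

text \<open>Spherically symmetric initial data, all quantities as functions of the
  geodesic distance l \<ge> 0 to the centre.  r is the area radius, r1, r2 its first and
  second derivatives; KL, KR the components of the second fundamental form, KR1 the
  derivative of KR; mu the energy density, j the radial momentum density,
  muM the non-electromagnetic energy density, E the radial electric field,
  rho the charge density.  The magnetic field is B = 0 (no magnetic charges).\<close>

definition theta_plus :: "(real \<Rightarrow> real) \<Rightarrow> (real \<Rightarrow> real) \<Rightarrow> (real \<Rightarrow> real) \<Rightarrow> real \<Rightarrow> real" where
  "theta_plus r r1 KR l = 2 / r l * (r1 l + KR l * r l)"

definition theta_minus :: "(real \<Rightarrow> real) \<Rightarrow> (real \<Rightarrow> real) \<Rightarrow> (real \<Rightarrow> real) \<Rightarrow> real \<Rightarrow> real" where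
  "theta_minus r r1 KR l = 2 / r l * (r1 l - KR l * r l)"

definition misner_sharp :: "(real \<Rightarrow> real) \<Rightarrow> (real \<Rightarrow> real) \<Rightarrow> (real \<Rightarrow> real) \<Rightarrow> real \<Rightarrow> real" where
  "misner_sharp r r1 KR l =
     r l / 2 * (1 - (r l)\<^sup>2 / 4 * (theta_plus r r1 KR l * theta_minus r r1 KR l))"

definition adm_mass :: "(real \<Rightarrow> real) \<Rightarrow> (real \<Rightarrow> real) \<Rightarrow> (real \<Rightarrow> real) \<Rightarrow> real" where
  "adm_mass r r1 KR = Lim at_top (misner_sharp r r1 KR)"

definition ss_EM_data ::
  "(real \<Rightarrow> real) \<Rightarrow> (real \<Rightarrow> real) \<Rightarrow> (real \<Rightarrow> real) \<Rightarrow> (real \<Rightarrow> real) \<Rightarrow> (real \<Rightarrow> real)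
   \<Rightarrow> (real \<Rightarrow> real) \<Rightarrow> (real \<Rightarrow> real) \<Rightarrow> (real \<Rightarrow> real) \<Rightarrow> (real \<Rightarrow> real) \<Rightarrow> (real \<Rightarrow> real)
   \<Rightarrow> (real \<Rightarrow> real) \<Rightarrow> bool" where
  "ss_EM_data r r1 r2 KL KR KR1 mu j muM E rho \<longleftrightarrow>
     \<comment> \<open>regularity / smoothness (C^2 area radius, C^1 extrinsic curvature)\<close>
     (\<forall>l\<ge>0. (r has_real_derivative r1 l) (at l within {0..})) \<and>
     (\<forall>l\<ge>0. (r1 has_real_derivative r2 l) (at l within {0..})) \<and>
     continuous_on {0..} r2 \<and>
     (\<forall>l\<ge>0. (KR has_real_derivative KR1 l) (at l within {0..})) \<and>
     continuous_on {0..} KR1 \<and> continuous_on {0..} KL \<and>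
     continuous_on {0..} mu \<and> continuous_on {0..} j \<and> continuous_on {0..} muM \<and>
     continuous_on {0..} E \<and> continuous_on {0..} rho \<and>
     \<comment> \<open>regular centre; r is positive away from the centre\<close>
     r 0 = 0 \<and> r1 0 = 1 \<and> (\<forall>l>0. r l > 0) \<and>
     \<comment> \<open>constraint equations\<close>
     (\<forall>l>0. KR l * (KR l + 2 * KL l) - ((r1 l)\<^sup>2 + 2 * r l * r2 l - 1) / (r l)\<^sup>2 = 8 * pi * mu l) \<and>
     (\<forall>l>0. KR1 l + r1 l / r l * (KR l - KL l) = 4 * pi * j l) \<and>
     \<comment> \<open>Maxwell constraint (E r^2)' = 4 pi rho r^2; B = 0\<close>
     (\<forall>l\<ge>0. ((\<lambda>s. E s * (r s)\<^sup>2) has_real_derivative 4 * pi * rho l * (r l)\<^sup>2) (at l within {0..})) \<and>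
     \<comment> \<open>energy density split (B = 0)\<close>
     (\<forall>l\<ge>0. mu l = muM l + (E l)\<^sup>2 / (8 * pi)) \<and>
     \<comment> \<open>asymptotic flatness (consequences in spherical symmetry)\<close>
     filterlim r at_top at_top \<and> (r1 \<longlongrightarrow> 1) at_top \<and>
     ((\<lambda>l. r l * KR l) \<longlongrightarrow> 0) at_top \<and>
     (\<exists>C. \<forall>\<^sub>F l in at_top. \<bar>(r l)\<^sup>2 * KR l\<bar> \<le> C \<and> \<bar>(r l)\<^sup>2 * KL l\<bar> \<le> C)"

end

theory Submission
  imports Defs
begin

(* By the constraint equations the Misner-Sharp energy m = r/2 (1 - r'^2 + (K_r r)^2) has
   m' = 4 pi r^2 (mu r' + j K_r r).  In the electrovacuum exterior the charge Q = E r^2 is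
   constant and so is m + Q^2/(2r) =: M, which is the ADM mass; hence there
   theta+ theta- = 4/r^4 (r^2 - 2 M r + Q^2), as for Reissner-Nordstrom.  Since r runs through
   all of [r l0, oo) outside the ball, a horizon is a zero of this quadratic beyond which it stays
   positive, i.e. its outer root r+ = M + sqrt (M^2 - Q^2) >= |Q|.
   If the exterior is untrapped then r' > 0 at l0 (otherwise r could not tend to infinity), and
   the dominant energy condition makes m nondecreasing wherever r' >= |K_r| r; starting from
   m = 0 at the centre this gives m(l0) >= 0, i.e. M >= Q^2/(2R).  Were 2R <= |Q|, then
   M >= |Q| >= R, so r takes the value M outside, where the quadratic is Q^2 - M^2 <= 0. *)

lemma at_within_atLeast:
  fixes a l :: real
  assumes "a < l"
  shows "at l within {a..} = at l"
  using assms by (intro at_within_interior) simp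

lemma continuous_on_sign_eq:
  fixes f :: "real \<Rightarrow> real"
  assumes "continuous_on {a..b} f" "a \<le> b" "\<forall>x\<in>{a..b}. f x \<noteq> 0"
  shows "0 < f a \<longleftrightarrow> 0 < f b"
  using IVT'[of f a 0 b] IVT2'[of f b 0 a] assms by force

lemma continuous_on_last_nonneg:
  fixes f :: "real \<Rightarrow> real"
  assumes "continuous_on {a..b} f" "a \<le> b" "0 \<le> f a"
  obtains c where "c \<in> {a..b}" "0 \<le> f c" "\<forall>x\<in>{c<..b}. f x < 0"
proof -
  define S where "S = {a..b} \<inter> f -` {0..}"
  have "closed S" unfolding S_def
    using assms(1) by (intro continuous_closed_preimage) auto
  moreover have "a \<in> S" "bdd_above S"
    using assms(2,3) unfolding S_def by (auto intro: bdd_aboveI[of _ b])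
  ultimately have "Sup S \<in> S" "\<forall>x\<in>S. x \<le> Sup S"
    by (auto intro: closed_contains_Sup cSup_upper)
  then show thesis
    by (intro that[of "Sup S"]) (auto simp: S_def not_le[symmetric])
qed

lemma DERIV_zero_imp_constant_atLeast:
  fixes f :: "real \<Rightarrow> real"
  assumes "continuous_on {a..} f" "\<And>x. a < x \<Longrightarrow> (f has_real_derivative 0) (at x)" "a \<le> x"
  shows "f x = f a"
  using assms by (intro DERIV_isconst2[of a "x + 1"]) (auto intro: continuous_on_subset)

lemma dominant_energy_flux_nonneg:
  fixes mu j k s :: real
  assumes "\<bar>j\<bar> \<le> mu" "\<bar>k\<bar> \<le> s"
  shows "0 \<le> mu * s + j * k"
proof -
  have "\<bar>j * k\<bar> \<le> mu * s"
    unfolding abs_mult using assms by (intro mult_mono) auto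
  then show ?thesis by linarith
qed

lemma misner_sharp_eq:
  "misner_sharp r r1 KR l = r l / 2 * (1 - (r1 l)\<^sup>2 + (KR l * r l)\<^sup>2)"
  by (cases "r l = 0")
    (simp_all add: misner_sharp_def theta_plus_def theta_minus_def field_simps power2_eq_square)

lemma theta_product_eq:
  assumes "r l \<noteq> 0"
  shows "theta_plus r r1 KR l * theta_minus r r1 KR l = 4 / (r l)\<^sup>2 * ((r1 l)\<^sup>2 - (KR l * r l)\<^sup>2)"
  using assms by (simp add: theta_plus_def theta_minus_def field_simps power2_eq_square)

lemma theta_product_pos_imp_r1_nonzero:
  assumes "r l \<noteq> 0" "theta_plus r r1 KR l * theta_minus r r1 KR l > 0"
  shows "r1 l \<noteq> 0"
proof
  assume "r1 l = 0"
  then have "theta_plus r r1 KR l * theta_minus r r1 KR l = - 4 * (KR l)\<^sup>2"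
    using assms(1) by (simp add: theta_product_eq power_mult_distrib)
  with assms(2) show False by simp
qed

locale ss_EM =
  fixes r r1 r2 KL KR KR1 mu j muM E rho :: "real \<Rightarrow> real"
  assumes data: "ss_EM_data r r1 r2 KL KR KR1 mu j muM E rho"
begin

abbreviation "m \<equiv> misner_sharp r r1 KR"

abbreviation "theta_prod l \<equiv> theta_plus r r1 KR l * theta_minus r r1 KR l"

lemma r_pos: "0 < l \<Longrightarrow> 0 < r l"
  using data by (simp add: ss_EM_data_def)

lemma r_tendsto_at_top: "filterlim r at_top at_top"
  using data by (simp add: ss_EM_data_def)

lemma has_real_derivative_at:
  assumes "0 < l"
  shows "(r has_real_derivative r1 l) (at l)"
    and "(r1 has_real_derivative r2 l) (at l)"
    and "(KR has_real_derivative KR1 l) (at l)"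
    and "((\<lambda>s. E s * (r s)\<^sup>2) has_real_derivative 4 * pi * rho l * (r l)\<^sup>2) (at l)"
  using data assms unfolding ss_EM_data_def at_within_atLeast[OF assms, symmetric] by auto

lemma hamiltonian_constraint:
  assumes "0 < l"
  shows "8 * pi * mu l * (r l)\<^sup>2 = KR l * (KR l + 2 * KL l) * (r l)\<^sup>2 - ((r1 l)\<^sup>2 + 2 * r l * r2 l - 1)"
proof -
  have "KR l * (KR l + 2 * KL l) - ((r1 l)\<^sup>2 + 2 * r l * r2 l - 1) / (r l)\<^sup>2 = 8 * pi * mu l"
    using data assms unfolding ss_EM_data_def by blast
  with r_pos[OF assms] show ?thesis by (simp add: field_simps)
qed

lemma momentum_constraint:
  assumes "0 < l"
  shows "4 * pi * j l * r l = KR1 l * r l + r1 l * (KR l - KL l)"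
proof -
  have "KR1 l + r1 l / r l * (KR l - KL l) = 4 * pi * j l"
    using data assms unfolding ss_EM_data_def by blast
  with r_pos[OF assms] show ?thesis by (simp add: field_simps)
qed

lemma continuous_on_r: "continuous_on {0..} r"
  using data by (intro DERIV_continuous_on[of _ _ r1]) (simp add: ss_EM_data_def)

lemma continuous_on_r1: "continuous_on {0..} r1"
  using data by (intro DERIV_continuous_on[of _ _ r2]) (simp add: ss_EM_data_def)

lemma continuous_on_KR: "continuous_on {0..} KR"
  using data by (intro DERIV_continuous_on[of _ _ KR1]) (simp add: ss_EM_data_def)

lemma continuous_on_charge: "continuous_on {0..} (\<lambda>s. E s * (r s)\<^sup>2)"
  using data by (intro DERIV_continuous_on[of _ _ "\<lambda>l. 4 * pi * rho l * (r l)\<^sup>2"]) (simp add: ss_EM_data_def)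

lemma continuous_on_misner_sharp: "continuous_on {0..} m"
  unfolding misner_sharp_eq[abs_def]
  by (intro continuous_intros continuous_on_r continuous_on_r1 continuous_on_KR) auto

lemma continuous_on_Icc:
  assumes "0 \<le> a"
  shows "continuous_on {a..b} r" "continuous_on {a..b} r1" "continuous_on {a..b} m"
  using assms continuous_on_r continuous_on_r1 continuous_on_misner_sharp
  by (auto elim!: continuous_on_subset)

lemma misner_sharp_centre: "m 0 = 0"
  using data by (simp add: ss_EM_data_def misner_sharp_eq)

lemma energy_density_eq: "0 \<le> l \<Longrightarrow> mu l = muM l + (E l)\<^sup>2 / (8 * pi)"
  using data by (simp add: ss_EM_data_def)

lemma misner_sharp_has_real_derivative:
  assumes "0 < l"
  shows "(m has_real_derivative 4 * pi * (r l)\<^sup>2 * (mu l * r1 l + j l * KR l * r l)) (at l)"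
proof -
  have "(m has_real_derivative
       r1 l / 2 * (1 - (r1 l)\<^sup>2 + (KR l * r l)\<^sup>2)
       + r l / 2 * (- 2 * r1 l * r2 l + 2 * (KR l * r l) * (KR1 l * r l + KR l * r1 l))) (at l)"
    unfolding misner_sharp_eq[abs_def]
    by (rule derivative_eq_intros has_real_derivative_at[OF assms] refl | simp)+
  also have "r1 l / 2 * (1 - (r1 l)\<^sup>2 + (KR l * r l)\<^sup>2)
       + r l / 2 * (- 2 * r1 l * r2 l + 2 * (KR l * r l) * (KR1 l * r l + KR l * r1 l))
     = r1 l / 2 * (8 * pi * mu l * (r l)\<^sup>2) + KR l * (r l)\<^sup>2 * (4 * pi * j l * r l)"
    unfolding hamiltonian_constraint[OF assms] momentum_constraint[OF assms]
    by (simp add: algebra_simps power2_eq_square)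
  also have "\<dots> = 4 * pi * (r l)\<^sup>2 * (mu l * r1 l + j l * KR l * r l)"
    by (simp add: algebra_simps power2_eq_square)
  finally show ?thesis .
qed

lemma r_exceeds: "\<exists>b\<ge>a. c \<le> r b"
proof -
  have "\<forall>\<^sub>F l in at_top. a \<le> l \<and> c \<le> r l"
    using r_tendsto_at_top by (simp add: filterlim_at_top eventually_conj eventually_ge_at_top)
  then show ?thesis by (auto simp: eventually_at_top_linorder)
qed

lemma r_attains:
  assumes "0 \<le> a" "r a \<le> c"
  shows "\<exists>y\<ge>a. r y = c"
proof -
  obtain b where "a \<le> b" "c \<le> r b" using r_exceeds by blast
  then show ?thesis
    using IVT'[OF assms(2) _ _ continuous_on_Icc(1)[OF assms(1)]] by auto
qed

lemma r1_pos_if_nonzero_beyond: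
  assumes "0 \<le> a" "\<forall>l\<ge>a. r1 l \<noteq> 0"
  shows "0 < r1 a"
proof (rule ccontr)
  assume "\<not> 0 < r1 a"
  have r1_neg: "r1 l < 0" if "a \<le> l" for l
  proof -
    have "0 < r1 a \<longleftrightarrow> 0 < r1 l"
      using continuous_on_Icc(2)[OF assms(1)] that assms(2) by (intro continuous_on_sign_eq) auto
    with \<open>\<not> 0 < r1 a\<close> that assms(2) show ?thesis
      by (auto simp: not_less order_le_less)
  qed
  obtain b where b: "a \<le> b" "r a + 1 \<le> r b" using r_exceeds by blast
  have "r b \<le> r a"
  proof (rule DERIV_nonpos_imp_decreasing_open[OF b(1)])
    show "continuous_on {a..b} r" using continuous_on_Icc(1)[OF assms(1)] .
    fix x assume "a < x" "x < b"
    then show "\<exists>y. (r has_real_derivative y) (at x) \<and> y \<le> 0"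
      using has_real_derivative_at(1)[of x] r1_neg[of x] assms(1) by (auto intro: less_imp_le)
  qed
  with b(2) show False by simp
qed

lemma misner_sharp_nonneg:
  assumes "0 < b" and dec: "\<forall>l\<in>{0..b}. \<bar>j l\<bar> \<le> mu l" and "0 < r1 b"
  shows "0 \<le> m b"
proof (rule ccontr)
  assume "\<not> 0 \<le> m b"
  \<comment> \<open>Past the last point c where m is nonnegative, m < 0 forces r1^2 > 1 + (KR r)^2, so r1
     keeps the sign of r1 b and the region (c, b] is untrapped.\<close>
  obtain c where c: "c \<in> {0..b}" "0 \<le> m c" and m_neg: "\<forall>x\<in>{c<..b}. m x < 0"
    using continuous_on_last_nonneg[OF continuous_on_Icc(3)] misner_sharp_centre assms(1)
    by (metis less_imp_le order_refl)
  have r1_sq_gt: "(KR x * r x)\<^sup>2 < (r1 x)\<^sup>2" if "x \<in> {c<..b}" for x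
  proof -
    have "0 < r x" using that c r_pos by simp
    with m_neg that have "1 - (r1 x)\<^sup>2 + (KR x * r x)\<^sup>2 < 0"
      by (auto simp: misner_sharp_eq mult_less_0_iff)
    then show ?thesis by simp
  qed
  have r1_pos: "0 < r1 x" if "x \<in> {c<..b}" for x
  proof -
    have "0 < r1 x \<longleftrightarrow> 0 < r1 b"
    proof (rule continuous_on_sign_eq[of x b r1])
      show "continuous_on {x..b} r1" using continuous_on_Icc(2) that c by simp
      show "\<forall>y\<in>{x..b}. r1 y \<noteq> 0"
      proof
        fix y assume "y \<in> {x..b}"
        with r1_sq_gt[of y] that show "r1 y \<noteq> 0" by auto
      qed
    qed (use that in simp)
    with \<open>0 < r1 b\<close> show ?thesis by simp
  qed
  have "m c \<le> m b"
  proof (rule DERIV_nonneg_imp_increasing_open[of c b m])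
    show "c \<le> b" using c by simp
    show "continuous_on {c..b} m" using continuous_on_Icc(3) c by simp
    fix x assume x: "c < x" "x < b"
    then have "\<bar>KR x * r x\<bar> \<le> \<bar>r1 x\<bar>"
      using r1_sq_gt[of x] by (simp add: abs_le_square_iff)
    then have "\<bar>KR x * r x\<bar> \<le> r1 x"
      using r1_pos[of x] x by simp
    then have "0 \<le> mu x * r1 x + j x * (KR x * r x)"
      using dec x c by (intro dominant_energy_flux_nonneg) auto
    then show "\<exists>y. (m has_real_derivative y) (at x) \<and> 0 \<le> y"
      using misner_sharp_has_real_derivative[of x] x c by (auto simp: mult.assoc)
  qed
  with c \<open>\<not> 0 \<le> m b\<close> show False by simp
qed

lemma misner_sharp_nonneg_if_untrapped:
  assumes "0 < b" "\<forall>l\<in>{0..b}. \<bar>j l\<bar> \<le> mu l" "\<forall>l\<ge>b. 0 < theta_prod l"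
  shows "0 \<le> m b"
proof (rule misner_sharp_nonneg[OF assms(1,2)])
  have "r1 l \<noteq> 0" if "b \<le> l" for l
  proof (rule theta_product_pos_imp_r1_nonzero[of r l r1 KR])
    show "r l \<noteq> 0" using that assms(1) r_pos[of l] by simp
    show "0 < theta_prod l" using that assms(3) by simp
  qed
  then show "0 < r1 b" using assms(1) by (intro r1_pos_if_nonzero_beyond) auto
qed

end

locale ss_EM_electrovac_exterior = ss_EM +
  fixes l0 :: real
  assumes l0_pos: "0 < l0"
    and electrovac: "\<forall>l\<ge>l0. muM l = 0 \<and> j l = 0 \<and> rho l = 0"
begin

definition Q :: real where "Q = E l0 * (r l0)\<^sup>2"

definition M :: real where "M = m l0 + Q\<^sup>2 / (2 * r l0)"

lemma r_pos_exterior: "l0 \<le> l \<Longrightarrow> 0 < r l"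
  using r_pos[of l] l0_pos by simp

lemma charge_exterior:
  assumes "l0 \<le> l"
  shows "E l * (r l)\<^sup>2 = Q"
  unfolding Q_def
proof (rule DERIV_zero_imp_constant_atLeast[OF _ _ assms])
  show "continuous_on {l0..} (\<lambda>s. E s * (r s)\<^sup>2)"
    using continuous_on_charge l0_pos by (auto elim!: continuous_on_subset)
  fix x assume "l0 < x"
  with has_real_derivative_at(4)[of x] electrovac l0_pos
  show "((\<lambda>s. E s * (r s)\<^sup>2) has_real_derivative 0) (at x)" by simp
qed

lemma misner_sharp_exterior:
  assumes "l0 \<le> l"
  shows "m l = M - Q\<^sup>2 / (2 * r l)"
proof -
  have "m l + Q\<^sup>2 / (2 * r l) = M"
    unfolding M_def
  proof (rule DERIV_zero_imp_constant_atLeast[OF _ _ assms])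
    have "\<forall>x\<in>{l0..}. r x \<noteq> 0" using r_pos_exterior by force
    then show "continuous_on {l0..} (\<lambda>s. m s + Q\<^sup>2 / (2 * r s))"
      using continuous_on_r continuous_on_misner_sharp l0_pos
      by (auto intro!: continuous_intros elim!: continuous_on_subset)
    fix x assume x: "l0 < x"
    have rx: "0 < r x" using r_pos_exterior x by simp
    have "E x = Q / (r x)\<^sup>2" using charge_exterior[of x] x rx by (simp add: field_simps)
    then have "mu x = Q\<^sup>2 / (8 * pi * (r x)\<^sup>2 * (r x)\<^sup>2)" "j x = 0"
      using energy_density_eq[of x] electrovac x l0_pos by (auto simp: power_divide power_mult_distrib)
    then have "4 * pi * (r x)\<^sup>2 * (mu x * r1 x + j x * KR x * r x) - Q\<^sup>2 * r1 x / (2 * (r x)\<^sup>2) = 0"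
      using rx by (simp add: field_simps power2_eq_square)
    moreover have "((\<lambda>s. m s + Q\<^sup>2 / (2 * r s)) has_real_derivative
        4 * pi * (r x)\<^sup>2 * (mu x * r1 x + j x * KR x * r x) - Q\<^sup>2 * r1 x / (2 * (r x)\<^sup>2)) (at x)"
      using x l0_pos rx
      by (auto intro!: derivative_eq_intros misner_sharp_has_real_derivative has_real_derivative_at
          simp: field_simps power2_eq_square)
    ultimately show "((\<lambda>s. m s + Q\<^sup>2 / (2 * r s)) has_real_derivative 0) (at x)" by simp
  qed
  then show ?thesis by simp
qed

lemma theta_product_exterior:
  assumes "l0 \<le> l"
  shows "theta_prod l = 4 / (r l)^4 * ((r l)\<^sup>2 - 2 * M * r l + Q\<^sup>2)"
proof -
  have rl: "0 < r l" using r_pos_exterior assms by simp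
  have "r l / 2 * (1 - (r1 l)\<^sup>2 + (KR l * r l)\<^sup>2) = M - Q\<^sup>2 / (2 * r l)"
    using misner_sharp_exterior[OF assms] by (simp add: misner_sharp_eq)
  with rl have "(r1 l)\<^sup>2 - (KR l * r l)\<^sup>2 = ((r l)\<^sup>2 - 2 * M * r l + Q\<^sup>2) / (r l)\<^sup>2"
    by (simp add: field_simps power2_eq_square)
  with rl show ?thesis
    by (simp add: theta_product_eq power4_eq_xxxx power2_eq_square)
qed

lemma theta_product_exterior_sign:
  assumes "l0 \<le> l"
  shows "0 < theta_prod l \<longleftrightarrow> 0 < (r l)\<^sup>2 - 2 * M * r l + Q\<^sup>2"
    and "theta_prod l = 0 \<longleftrightarrow> (r l)\<^sup>2 - 2 * M * r l + Q\<^sup>2 = 0"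
proof -
  have "0 < 4 / (r l)^4" using r_pos_exterior[OF assms] by simp
  moreover have "(0 < c * g \<longleftrightarrow> 0 < g) \<and> (c * g = 0 \<longleftrightarrow> g = 0)" if "0 < c" for c g :: real
    using that by (simp add: zero_less_mult_iff)
  ultimately show "0 < theta_prod l \<longleftrightarrow> 0 < (r l)\<^sup>2 - 2 * M * r l + Q\<^sup>2"
    and "theta_prod l = 0 \<longleftrightarrow> (r l)\<^sup>2 - 2 * M * r l + Q\<^sup>2 = 0"
    unfolding theta_product_exterior[OF assms] by blast+
qed

lemma adm_mass_exterior: "adm_mass r r1 KR = M"
proof -
  have "\<forall>\<^sub>F l in at_top. M - Q\<^sup>2 / 2 * inverse (r l) = m l"
    using eventually_ge_at_top[of l0]
    by eventually_elim (simp add: misner_sharp_exterior field_simps)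
  moreover have "((\<lambda>l. M - Q\<^sup>2 / 2 * inverse (r l)) \<longlongrightarrow> M - Q\<^sup>2 / 2 * 0) at_top"
    by (intro tendsto_intros tendsto_inverse_0_at_top r_tendsto_at_top)
  ultimately have "(m \<longlongrightarrow> M) at_top" by (simp add: tendsto_cong)
  then show ?thesis unfolding adm_mass_def by (rule tendsto_Lim[OF trivial_limit_at_top_linorder])
qed

lemma charge_lt_twice_radius_if_untrapped:
  assumes "0 \<le> m l0" "\<forall>l\<ge>l0. 0 < theta_prod l"
  shows "\<bar>Q\<bar> < 2 * r l0"
proof (rule ccontr)
  assume "\<not> \<bar>Q\<bar> < 2 * r l0"
  then have le: "2 * r l0 \<le> \<bar>Q\<bar>" by simp
  have R: "0 < r l0" using r_pos_exterior by simp
  have "\<bar>Q\<bar> * (2 * r l0) \<le> \<bar>Q\<bar> * \<bar>Q\<bar>" using le by (intro mult_left_mono) auto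
  then have "\<bar>Q\<bar> \<le> Q\<^sup>2 / (2 * r l0)" using R by (simp add: field_simps power2_eq_square)
  with assms(1) have MQ: "\<bar>Q\<bar> \<le> M" by (simp add: M_def)
  then obtain y where "l0 \<le> y" "r y = M"
    using r_attains[of l0 M] l0_pos le R by auto
  with assms(2) have "0 < M\<^sup>2 - 2 * M * M + Q\<^sup>2"
    using theta_product_exterior_sign(1)[of y] by simp
  moreover have "Q\<^sup>2 \<le> M\<^sup>2" using MQ by (metis abs_ge_zero power2_abs power_mono)
  ultimately show False by (simp add: power2_eq_square)
qed

lemma horizon_radius:
  assumes "l0 \<le> lh" "theta_prod lh = 0" "\<forall>l>lh. 0 < theta_prod l"
  shows "\<bar>Q\<bar> \<le> r lh" and "M = \<bar>Q\<bar> \<Longrightarrow> r lh = \<bar>Q\<bar>"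
proof -
  define x where "x = r lh"
  have x: "0 < x" using r_pos_exterior assms(1) x_def by simp
  have root: "x\<^sup>2 - 2 * M * x + Q\<^sup>2 = 0"
    using theta_product_exterior_sign(2)[OF assms(1)] assms(2) x_def by simp
  have "M \<le> x"
  proof (rule ccontr)
    assume "\<not> M \<le> x"
    then obtain y where "lh \<le> y" "r y = M" "y \<noteq> lh"
      using r_attains[of lh M] assms(1) l0_pos x_def by force
    with assms(1,3) have "M\<^sup>2 < Q\<^sup>2"
      using theta_product_exterior_sign(1)[of y] by (simp add: power2_eq_square)
    moreover have "(x - M)\<^sup>2 = M\<^sup>2 - Q\<^sup>2" using root by (simp add: power2_eq_square algebra_simps)
    moreover have "0 \<le> (x - M)\<^sup>2" by simp
    ultimately show False by linarith
  qed
  then have "M * x \<le> x * x" using x by (simp add: mult_right_mono)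
  then have "Q\<^sup>2 \<le> x\<^sup>2" using root by (simp add: power2_eq_square)
  then show "\<bar>Q\<bar> \<le> r lh" using x x_def by (simp add: abs_le_square_iff[symmetric])
  show "r lh = \<bar>Q\<bar>" if "M = \<bar>Q\<bar>"
  proof -
    have "(x - \<bar>Q\<bar>)\<^sup>2 = 0" using root that by (simp add: power2_eq_square algebra_simps)
    then show ?thesis using x_def by simp
  qed
qed

end

theorem theorem1:
  fixes r r1 r2 KL KR KR1 mu j muM E rho :: "real \<Rightarrow> real" and l0 :: real
  assumes data: "ss_EM_data r r1 r2 KL KR KR1 mu j muM E rho"
    and l0_pos: "l0 > 0" and R_pos: "r l0 > 0"
    and electrovac: "\<forall>l\<ge>l0. muM l = 0 \<and> j l = 0 \<and> rho l = 0"
    and dec: "\<forall>l\<in>{0..l0}. mu l \<ge> \<bar>j l\<bar>"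
    and Q_nz: "E l0 * (r l0)\<^sup>2 \<noteq> 0"
  shows "((\<forall>l\<ge>l0. theta_plus r r1 KR l * theta_minus r r1 KR l > 0)
            \<longrightarrow> 2 * r l0 > \<bar>E l0 * (r l0)\<^sup>2\<bar>)
       \<and> (\<forall>l1 lh. 0 \<le> l1 \<and> l1 < lh \<and> l0 \<le> lh
            \<and> (\<forall>l\<in>{l1<..<lh}. theta_plus r r1 KR l * theta_minus r r1 KR l < 0)
            \<and> theta_plus r r1 KR lh * theta_minus r r1 KR lh = 0
            \<and> (\<forall>l>lh. theta_plus r r1 KR l * theta_minus r r1 KR l > 0)
            \<longrightarrow> r lh \<ge> \<bar>E l0 * (r l0)\<^sup>2\<bar>
              \<and> (adm_mass r r1 KR = \<bar>E l0 * (r l0)\<^sup>2\<bar> \<longrightarrow> r lh = \<bar>E l0 * (r l0)\<^sup>2\<bar>))"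
proof -
  interpret ss_EM_electrovac_exterior r r1 r2 KL KR KR1 mu j muM E rho l0
    using data l0_pos electrovac by unfold_locales
  show ?thesis
    unfolding Q_def[symmetric] adm_mass_exterior
  proof (intro conjI allI impI)
    assume "\<forall>l\<ge>l0. theta_plus r r1 KR l * theta_minus r r1 KR l > 0"
    with l0_pos dec show "2 * r l0 > \<bar>Q\<bar>"
      by (intro charge_lt_twice_radius_if_untrapped misner_sharp_nonneg_if_untrapped) auto
  next
    fix l1 lh
    assume "0 \<le> l1 \<and> l1 < lh \<and> l0 \<le> lh
            \<and> (\<forall>l\<in>{l1<..<lh}. theta_plus r r1 KR l * theta_minus r r1 KR l < 0)
            \<and> theta_plus r r1 KR lh * theta_minus r r1 KR lh = 0
            \<and> (\<forall>l>lh. theta_plus r r1 KR l * theta_minus r r1 KR l > 0)"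
    then show "r lh \<ge> \<bar>Q\<bar>" and "M = \<bar>Q\<bar> \<Longrightarrow> r lh = \<bar>Q\<bar>"
      using horizon_radius[of lh] by auto
  qed
qed

end
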